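(* The Ewens distribution $p^\star$, $p^\star_N(\pi)=\frac{\prod_{B\in\pi}(b-1)!}{n!}$, is the unique random partition $p$ with the following properties: (i) $p$ generates the potential for TU games, i.e., $\mathrm{E}_p(v)=\mathrm{Pot}(v)$ for all $N\subseteq\mathbf{U}$ and all TU games $v$ on $N$; (ii) there exists a path independent restriction operator $r$ that preserves null games, satisfies $\mathrm{Pot}^r=\mathrm{E}_p$, and whose $r$-Shapley value $\mathrm{Sh}^r$ satisfies the null player property or monotonicity. Moreover, the restriction operator $r^\star$ given by $$w^{r^\star}_{-i}(S,\pi)=\frac{1}{n-s}w(S,\pi_{+i\leadsto\emptyset})+\sum_{B\in\pi}\frac{b}{n-s}w(S,\pi_{+i\leadsto B})$$ (for all $N\subseteq\mathbf{U}$, $w\in\mathbb{W}(N)$, $i\in N$, $(S,\pi)\in\mathcal{E}(N\setminus\{i\})$) is the unique such restriction operator, and it induces the MPW solution: $\mathrm{Sh}^{r^\star}=\mathrm{MPW}$.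
   Context: $\mathbf{U}$ is a finite set of players; cardinalities of sets $N,S,T,B$ are $n,s,t,b$. $\Pi(N)$ is the set of partitions of $N$ (with $\Pi(\emptyset)=\{\emptyset\}$). A random partition is a family $p=(p_N)_{N\subseteq\mathbf{U}}$ with $p_N$ a probability distribution on $\Pi(N)$. For $\pi\in\Pi(N\setminus\{i\})$ and $B\in\pi$, $\pi_{+i\leadsto B}=(\pi\setminus\{B\})\cup\{B\cup\{i\}\}$ and $\pi_{+i\leadsto\emptyset}=\pi\cup\{\{i\}\}$. A TU game on $N$ is $v:2^N\to\mathbb{R}$, $v(\emptyset)=0$; $v_{-i}$ is its restriction to $2^{N\setminus\{i\}}$. The Shapley value is $\mathrm{Sh}_i(v)=\sum_{S\subseteq N\setminus\{i\}}\frac{s!(n-s-1)!}{n!}(v(S\cup\{i\})-v(S))$. The potential for TU games is $\mathrm{Pot}(v)=\sum_{\emptyset\neq S\subseteq N}\frac{(s-1)!(n-s)!}{n!}v(S)$ (the unique map with $\mathrm{Pot}=0$ on the empty player set and $\sum_{i\in N}[\mathrm{Pot}(v)-\mathrm{Pot}(v_{-i})]=v(N)$). Embedded coalitions: $\mathcal{E}(N)=\{(S,\pi):S\subseteq N,\pi\in\Pi(N\setminus S)\}$. A TUX game on $N$ is $w:\mathcal{E}(N)\to\mathbb{R}$ with $w(\emptyset,\pi)=0$; $\mathbb{W}(N)$ is their set; a TU game $v$ is identified with the TUX game $w(S,\pi)=v(S)$; $\mathbf{0}^N$ is the null game. $\mathrm{E}_p(w)=\sum_{\pi\in\Pi(N)}p_N(\pi)\sum_{S\in\pi}w(S,\pi\setminus\{S\})$.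 A restriction operator $r$ assigns to each $N$, $w\in\mathbb{W}(N)$, $i\in N$ a game $w^r_{-i}\in\mathbb{W}(N\setminus\{i\})$ such that $w^r_{-i}(S,\pi)$ depends only on the values $w(S,\pi_{+i\leadsto B})$, $B\in\pi\cup\{\emptyset\}$. Path independent: $(w^r_{-i})^r_{-j}=(w^r_{-j})^r_{-i}$ for distinct $i,j$ (so $w^r_{-T}$ is well defined). Preserves null games: $(\mathbf{0}^N)^r_{-i}=\mathbf{0}^{N\setminus\{i\}}$. For path independent $r$: the auxiliary TU game is $v^r_w(S)=w^r_{-(N\setminus S)}(S,\emptyset)$, the $r$-potential is $\mathrm{Pot}^r(w)=\mathrm{Pot}(v^r_w)$ (the unique map with $\mathrm{Pot}^r(\mathbf{0}^\emptyset)=0$ and $\sum_{i\in N}[\mathrm{Pot}^r(w)-\mathrm{Pot}^r(w^r_{-i})]=w(N,\emptyset)$), and the $r$-Shapley value is $\mathrm{Sh}^r(w)=\mathrm{Sh}(v^r_w)$. The MPW solution is $\mathrm{MPW}(w)=\mathrm{Sh}(\bar v^\star_w)$ where $\bar v^\star_w(S)=\sum_{\pi\in\Pi(N\setminus S)}p^\star_{N\setminus S}(\pi)w(S,\pi)$. Player $i$ is a null player in $w\in\mathbb{W}(N)$ if $w(S\cup\{i\},\pi)=w(S,\pi_{+i\leadsto B})$ for all $(S,\pi)\in\mathcal{E}(N\setminus\{i\})$, $B\in\pi\cup\{\emptyset\}$. A solution $\varphi$ (assigning $\varphi(w)\in\mathbb{R}^N$ to each $w\in\mathbb{W}(N)$)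 satisfies the null player property if $\varphi_i(w)=0$ whenever $i$ is a null player in $w$; it satisfies monotonicity if, for $w,z\in\mathbb{W}(N)$ and $i\in N$ with $w(S\cup\{i\},\pi)-w(S,\pi_{+i\leadsto B})\ge z(S\cup\{i\},\pi)-z(S,\pi_{+i\leadsto B})$ for all $(S,\pi)\in\mathcal{E}(N\setminus\{i\})$, $B\in\pi\cup\{\emptyset\}$, one has $\varphi_i(w)\ge\varphi_i(z)$. *)

theory Defs
  imports Complex_Main "HOL-Library.Disjoint_Sets"
begin

type_synonym 'a tux = "'a set \<Rightarrow> 'a set set \<Rightarrow> real"
type_synonym 'a rpart = "'a set \<Rightarrow> 'a set set \<Rightarrow> real"
type_synonym 'a restr = "'a set \<Rightarrow> 'a tux \<Rightarrow> 'a \<Rightarrow> 'a tux"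
type_synonym 'a solution = "'a set \<Rightarrow> 'a tux \<Rightarrow> 'a \<Rightarrow> real"

definition partitions :: "'a set \<Rightarrow> 'a set set set" where
  "partitions N = {\<pi>. partition_on N \<pi>}"

(* pi_{+i ~> B}; B = {} encodes the empty set option *)
definition add_to :: "'a \<Rightarrow> 'a set set \<Rightarrow> 'a set \<Rightarrow> 'a set set" where
  "add_to i \<pi> B = (if B = {} then insert {i} \<pi> else insert (insert i B) (\<pi> - {B}))"

definition embedded :: "'a set \<Rightarrow> 'a set \<Rightarrow> 'a set set \<Rightarrow> bool" where
  "embedded N S \<pi> \<longleftrightarrow> S \<subseteq> N \<and> partition_on (N - S) \<pi>"

(* w in W(N) (values outside E(N) are irrelevant) *)
definition tux_game :: "'a set \<Rightarrow> 'a tux \<Rightarrow> bool" where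
  "tux_game N w \<longleftrightarrow> (\<forall>\<pi>. partition_on N \<pi> \<longrightarrow> w {} \<pi> = 0)"

definition random_partition :: "'a set \<Rightarrow> 'a rpart \<Rightarrow> bool" where
  "random_partition U p \<longleftrightarrow> (\<forall>N. N \<subseteq> U \<longrightarrow>
     (\<forall>\<pi>\<in>partitions N. p N \<pi> \<ge> 0) \<and> (\<Sum>\<pi>\<in>partitions N. p N \<pi>) = 1)"

definition ewens :: "'a rpart" where
  "ewens N \<pi> = (\<Prod>B\<in>\<pi>. fact (card B - 1)) / fact (card N)"

definition expect :: "'a rpart \<Rightarrow> 'a set \<Rightarrow> 'a tux \<Rightarrow> real" where
  "expect p N w = (\<Sum>\<pi>\<in>partitions N. p N \<pi> * (\<Sum>S\<in>\<pi>. w S (\<pi> - {S})))"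

definition shapley :: "'a set \<Rightarrow> ('a set \<Rightarrow> real) \<Rightarrow> 'a \<Rightarrow> real" where
  "shapley N v i = (\<Sum>S | S \<subseteq> N - {i}.
     fact (card S) * fact (card N - card S - 1) / fact (card N) * (v (insert i S) - v S))"

definition pot :: "'a set \<Rightarrow> ('a set \<Rightarrow> real) \<Rightarrow> real" where
  "pot N v = (\<Sum>S | S \<subseteq> N \<and> S \<noteq> {}.
     fact (card S - 1) * fact (card N - card S) / fact (card N) * v S)"

definition generates_potential :: "'a set \<Rightarrow> 'a rpart \<Rightarrow> bool" where
  "generates_potential U p \<longleftrightarrow> (\<forall>N v. N \<subseteq> U \<longrightarrow> v {} = 0 \<longrightarrow>
      expect p N (\<lambda>S \<pi>. v S) = pot N v)"

definition restriction_operator :: "'a set \<Rightarrow> 'a restr \<Rightarrow> bool" where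
  "restriction_operator U r \<longleftrightarrow> (\<forall>N w i. N \<subseteq> U \<longrightarrow> tux_game N w \<longrightarrow> i \<in> N \<longrightarrow>
      tux_game (N - {i}) (r N w i) \<and>
      (\<forall>w' S \<pi>. tux_game N w' \<longrightarrow> embedded (N - {i}) S \<pi> \<longrightarrow>
          (\<forall>B\<in>insert {} \<pi>. w S (add_to i \<pi> B) = w' S (add_to i \<pi> B)) \<longrightarrow>
          r N w i S \<pi> = r N w' i S \<pi>))"

definition path_independent :: "'a set \<Rightarrow> 'a restr \<Rightarrow> bool" where
  "path_independent U r \<longleftrightarrow> (\<forall>N w i j S \<pi>. N \<subseteq> U \<longrightarrow> tux_game N w \<longrightarrow>
      i \<in> N \<longrightarrow> j \<in> N \<longrightarrow> i \<noteq> j \<longrightarrow> embedded (N - {i, j}) S \<pi> \<longrightarrow>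
      r (N - {i}) (r N w i) j S \<pi> = r (N - {j}) (r N w j) i S \<pi>)"

definition preserves_null :: "'a set \<Rightarrow> 'a restr \<Rightarrow> bool" where
  "preserves_null U r \<longleftrightarrow> (\<forall>N i S \<pi>. N \<subseteq> U \<longrightarrow> i \<in> N \<longrightarrow> embedded (N - {i}) S \<pi> \<longrightarrow>
      r N (\<lambda>S \<pi>. 0) i S \<pi> = 0)"

fun restr_list :: "'a restr \<Rightarrow> 'a set \<Rightarrow> 'a tux \<Rightarrow> 'a list \<Rightarrow> 'a tux" where
  "restr_list r N w [] = w"
| "restr_list r N w (i # is) = restr_list r (N - {i}) (r N w i) is"

(* w^r_{-T}: well defined (order independent) for path independent r *)
definition restr_set :: "'a restr \<Rightarrow> 'a set \<Rightarrow> 'a tux \<Rightarrow> 'a set \<Rightarrow> 'a tux" where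
  "restr_set r N w T = restr_list r N w (SOME xs. distinct xs \<and> set xs = T)"

definition aux_game :: "'a restr \<Rightarrow> 'a set \<Rightarrow> 'a tux \<Rightarrow> 'a set \<Rightarrow> real" where
  "aux_game r N w S = restr_set r N w (N - S) S {}"

definition pot_r :: "'a restr \<Rightarrow> 'a set \<Rightarrow> 'a tux \<Rightarrow> real" where
  "pot_r r N w = pot N (aux_game r N w)"

definition shapley_r :: "'a restr \<Rightarrow> 'a solution" where
  "shapley_r r N w i = shapley N (aux_game r N w) i"

definition mpw :: "'a solution" where
  "mpw N w i = shapley N (\<lambda>S. \<Sum>\<pi>\<in>partitions (N - S). ewens (N - S) \<pi> * w S \<pi>) i"

definition null_player :: "'a set \<Rightarrow> 'a tux \<Rightarrow> 'a \<Rightarrow> bool" where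
  "null_player N w i \<longleftrightarrow> (\<forall>S \<pi>. embedded (N - {i}) S \<pi> \<longrightarrow>
      (\<forall>B\<in>insert {} \<pi>. w (insert i S) \<pi> = w S (add_to i \<pi> B)))"

definition null_player_property :: "'a set \<Rightarrow> 'a solution \<Rightarrow> bool" where
  "null_player_property U \<phi> \<longleftrightarrow> (\<forall>N w i. N \<subseteq> U \<longrightarrow> tux_game N w \<longrightarrow> i \<in> N \<longrightarrow>
      null_player N w i \<longrightarrow> \<phi> N w i = 0)"

definition monotonic :: "'a set \<Rightarrow> 'a solution \<Rightarrow> bool" where
  "monotonic U \<phi> \<longleftrightarrow> (\<forall>N w z i. N \<subseteq> U \<longrightarrow> tux_game N w \<longrightarrow> tux_game N z \<longrightarrow> i \<in> N \<longrightarrow>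
      (\<forall>S \<pi>. embedded (N - {i}) S \<pi> \<longrightarrow> (\<forall>B\<in>insert {} \<pi>.
          w (insert i S) \<pi> - w S (add_to i \<pi> B) \<ge> z (insert i S) \<pi> - z S (add_to i \<pi> B))) \<longrightarrow>
      \<phi> N w i \<ge> \<phi> N z i)"

(* property (ii) for a given random partition p and operator r *)
definition admissible_restriction :: "'a set \<Rightarrow> 'a rpart \<Rightarrow> 'a restr \<Rightarrow> bool" where
  "admissible_restriction U p r \<longleftrightarrow> restriction_operator U r \<and> path_independent U r \<and>
     preserves_null U r \<and>
     (\<forall>N w. N \<subseteq> U \<longrightarrow> tux_game N w \<longrightarrow> pot_r r N w = expect p N w) \<and>
     (null_player_property U (shapley_r r) \<or> monotonic U (shapley_r r))"

definition r_star :: "'a restr" where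
  "r_star N w i S \<pi> = 1 / real (card N - card S) * w S (add_to i \<pi> {})
     + (\<Sum>B\<in>\<pi>. real (card B) / real (card N - card S) * w S (add_to i \<pi> B))"

end

(*
  Under the Ewens distribution, inserting a player i into a random partition of the other
  players is the Chinese restaurant process: i opens a new block with weight 1 and joins a
  block B with weight |B|.  So r_star is the conditional expectation of w given the
  partition of the players other than i, and restricting w along any order of players
  produces the MPW game S |-> E[w(S, .)]; this yields Pot^{r_star} = E_{p_star}, path
  independence and the null player property.

  Conversely, let r be admissible for p.  Testing Pot^r = E_p on games supported on one
  coalition expresses p through the auxiliary game of r.  Applying the null player property
  to a game in which i is null, but which records whether i joins the block X or stays
  alone, gives p(i joins X) = |X| p(i alone); hence p is proportional to the product of
  the (|B| - 1)!, i.e. p = p_star.  Then the auxiliary game of r is the MPW game, and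
  comparing it before and after removing i on a game supported on a single fibre
  identifies r with r_star.
*)

theory Submission
  imports Defs
begin

section \<open>Inserting a player into a partition and removing it\<close>

definition remove_elem :: "'a \<Rightarrow> 'a set set \<Rightarrow> 'a set set" where
  "remove_elem x \<rho> = (\<lambda>X. X - {x}) ` \<rho> - {{}}"

lemma mem_partitions_iff [simp]: "\<pi> \<in> partitions A \<longleftrightarrow> partition_on A \<pi>"
  by (simp add: partitions_def)

lemma finite_partitions: "finite A \<Longrightarrow> finite (partitions A)"
  unfolding partitions_def by (rule finitely_many_partition_on)

lemma partitions_empty: "partitions {} = {{}}"
  by (auto simp: partition_on_empty)

lemma finite_block: "partition_on A \<pi> \<Longrightarrow> finite A \<Longrightarrow> B \<in> \<pi> \<Longrightarrow> finite B"
  using finite_subset[of B A] by (auto simp: partition_on_def)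

lemma partition_on_Diff_block:
  assumes "partition_on A \<pi>" "B \<in> \<pi>"
  shows "partition_on (A - B) (\<pi> - {B})"
proof -
  have "disjnt B (\<Union>(\<pi> - {B}))"
    using assms by (auto simp: partition_on_def disjoint_def disjnt_def)
  then show ?thesis
    using partition_on_insert[of B "\<pi> - {B}" A] assms by (simp add: insert_absorb)
qed

lemma partition_on_add_to:
  assumes "partition_on A \<pi>" "x \<notin> A" "B \<in> insert {} \<pi>"
  shows "partition_on (insert x A) (add_to x \<pi> B)"
proof (cases "B = {}")
  case True
  have "disjnt {x} (\<Union>\<pi>)"
    using assms(1,2) by (auto simp: partition_on_def disjnt_def)
  moreover have "insert x A - {x} = A" using assms(2) by simp
  ultimately show ?thesis
    using True assms(1) by (simp add: add_to_def partition_on_insert)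
next
  case False
  then have B: "B \<in> \<pi>" using assms(3) by simp
  have "disjnt (insert x B) (\<Union>(\<pi> - {B}))"
    using assms(1,2) B by (auto simp: partition_on_def disjoint_def disjnt_def)
  moreover have "insert x A - insert x B = A - B" "B \<subseteq> A"
    using assms(1,2) B by (auto simp: partition_on_def)
  ultimately show ?thesis
    using False partition_on_Diff_block[OF assms(1) B] by (auto simp: add_to_def partition_on_insert)
qed

lemma partition_on_remove_elem:
  assumes "partition_on A \<rho>"
  shows "partition_on (A - {x}) (remove_elem x \<rho>)"
  unfolding remove_elem_def
  by (rule partition_on_transform[OF assms]) (auto simp: disjnt_def)

lemma remove_elem_add_to:
  assumes "partition_on A \<pi>" "x \<notin> A" "B \<in> insert {} \<pi>"
  shows "remove_elem x (add_to x \<pi> B) = \<pi>"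
proof -
  have "X - {x} = X" "X \<noteq> {}" if "X \<in> \<pi>" for X
    using assms(1,2) that by (auto simp: partition_on_def)
  moreover have "insert x B - {x} = B"
    using assms by (auto simp: partition_on_def)
  ultimately show ?thesis
    using assms(3) unfolding remove_elem_def add_to_def by (auto simp: image_iff)
qed

lemma add_to_inject:
  assumes "partition_on A \<pi>" "x \<notin> A" "B \<in> insert {} \<pi>" "B' \<in> insert {} \<pi>"
    and "add_to x \<pi> B = add_to x \<pi> B'"
  shows "B = B'"
proof -
  have "{X \<in> add_to x \<pi> C. x \<in> X} = {insert x C}" if "C \<in> insert {} \<pi>" for C
    using assms(1,2) that by (auto simp: partition_on_def add_to_def)
  then have "insert x B = insert x B'"
    using assms(3-5) by (metis singleton_inject)
  moreover have "x \<notin> B" "x \<notin> B'"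
    using assms(1-4) by (auto simp: partition_on_def)
  ultimately show ?thesis by (metis insert_ident)
qed

lemma add_to_remove_elem:
  assumes "partition_on A \<rho>" "x \<in> A"
  obtains B where "B \<in> insert {} (remove_elem x \<rho>)" "\<rho> = add_to x (remove_elem x \<rho>) B"
proof -
  obtain C where C: "C \<in> \<rho>" "x \<in> C"
    using assms by (auto simp: partition_on_def)
  have other: "D - {x} = D" "D \<noteq> {}" if "D \<in> \<rho>" "D \<noteq> C" for D
    using assms C that by (auto simp: partition_on_def disjoint_def)
  define B where "B = C - {x}"
  have C_eq: "C = insert x B"
    using C unfolding B_def by blast
  have "(\<lambda>X. X - {x}) ` \<rho> = insert B ((\<lambda>X. X - {x}) ` (\<rho> - {C}))"
    using C unfolding B_def by blast
  also have "(\<lambda>X. X - {x}) ` (\<rho> - {C}) = \<rho> - {C}"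
    using other(1) by simp
  finally have rem: "remove_elem x \<rho> = insert B (\<rho> - {C}) - {{}}"
    by (simp add: remove_elem_def)
  show ?thesis
  proof (cases "B = {}")
    case True
    then have "remove_elem x \<rho> = \<rho> - {C}"
      using rem other(2) by blast
    then show ?thesis
      using that[of "{}"] C True C_eq by (simp add: add_to_def insert_absorb)
  next
    case False
    have "B \<notin> \<rho> - {C}"
    proof
      assume "B \<in> \<rho> - {C}"
      then have "B \<inter> C = {}"
        using assms(1) C(1) by (auto simp: partition_on_def disjoint_def)
      then show False
        using False unfolding B_def by blast
    qed
    then have "remove_elem x \<rho> - {B} = \<rho> - {C}"
      using rem other(2) by blast
    then show ?thesis
      using that[of B] rem False C C_eq by (simp add: add_to_def insert_absorb)
  qed
qed

lemma remove_elem_commute: "remove_elem x (remove_elem y \<rho>) = remove_elem y (remove_elem x \<rho>)"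
proof -
  have "remove_elem x (remove_elem y \<rho>) = (\<lambda>X. X - {x, y}) ` \<rho> - {{}}" for x y
    unfolding remove_elem_def by (auto simp: image_iff)
  then show ?thesis
    by (metis insert_commute)
qed

lemma bij_betw_add_to:
  assumes "x \<notin> A"
  shows "bij_betw (\<lambda>(\<pi>, B). add_to x \<pi> B) (SIGMA \<pi>:partitions A. insert {} \<pi>) (partitions (insert x A))"
proof (rule bij_betw_imageI)
  show "inj_on (\<lambda>(\<pi>, B). add_to x \<pi> B) (SIGMA \<pi>:partitions A. insert {} \<pi>)"
  proof (rule inj_onI, clarify)
    fix \<pi> B \<pi>' B'
    assume \<pi>: "\<pi> \<in> partitions A" "B \<in> insert {} \<pi>" and \<pi>': "\<pi>' \<in> partitions A" "B' \<in> insert {} \<pi>'"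
      and eq: "add_to x \<pi> B = add_to x \<pi>' B'"
    have "\<pi> = \<pi>'"
      using remove_elem_add_to[of A \<pi> x B] remove_elem_add_to[of A \<pi>' x B'] \<pi> \<pi>' assms eq
      by simp
    then show "\<pi> = \<pi>' \<and> B = B'"
      using add_to_inject[of A \<pi> x B B'] \<pi> \<pi>' assms eq by simp
  qed
  have "\<rho> \<in> (\<lambda>(\<pi>, B). add_to x \<pi> B) ` (SIGMA \<pi>:partitions A. insert {} \<pi>)"
    if \<rho>: "partition_on (insert x A) \<rho>" for \<rho>
  proof -
    obtain B where "B \<in> insert {} (remove_elem x \<rho>)" "\<rho> = add_to x (remove_elem x \<rho>) B"
      using add_to_remove_elem[OF \<rho> insertI1] by blast
    moreover have "partition_on A (remove_elem x \<rho>)"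
      using partition_on_remove_elem[OF \<rho>, of x] assms by simp
    ultimately show ?thesis by force
  qed
  then show "(\<lambda>(\<pi>, B). add_to x \<pi> B) ` (SIGMA \<pi>:partitions A. insert {} \<pi>) = partitions (insert x A)"
    using assms by (auto intro: partition_on_add_to)
qed

lemma sum_partitions_insert:
  assumes "finite A" "x \<notin> A"
  shows "(\<Sum>\<rho>\<in>partitions (insert x A). f \<rho>) = (\<Sum>\<pi>\<in>partitions A. \<Sum>B\<in>insert {} \<pi>. f (add_to x \<pi> B))"
proof -
  have "finite \<pi>" if "\<pi> \<in> partitions A" for \<pi>
    using assms(1) that finite_elements by auto
  then have "(\<Sum>\<pi>\<in>partitions A. \<Sum>B\<in>insert {} \<pi>. f (add_to x \<pi> B))
      = (\<Sum>(\<pi>, B)\<in>(SIGMA \<pi>:partitions A. insert {} \<pi>). f (add_to x \<pi> B))"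
    using assms(1) by (simp add: sum.Sigma finite_partitions)
  also have "\<dots> = (\<Sum>\<rho>\<in>partitions (insert x A). f \<rho>)"
    using sum.reindex_bij_betw[OF bij_betw_add_to[OF assms(2)], of f] by (simp add: case_prod_beta)
  finally show ?thesis ..
qed

lemma sum_remove_elem_fibre:
  assumes "partition_on A \<tau>" "x \<notin> A"
  shows "(\<Sum>\<rho>\<in>{\<rho> \<in> partitions (insert x A). remove_elem x \<rho> = \<tau>}. f \<rho>)
       = (\<Sum>B\<in>insert {} \<tau>. f (add_to x \<tau> B))"
proof -
  have "{\<rho> \<in> partitions (insert x A). remove_elem x \<rho> = \<tau>} = add_to x \<tau> ` insert {} \<tau>"
  proof (intro equalityI subsetI)
    fix \<rho> assume "\<rho> \<in> {\<rho> \<in> partitions (insert x A). remove_elem x \<rho> = \<tau>}"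
    then have "partition_on (insert x A) \<rho>" "remove_elem x \<rho> = \<tau>"
      by auto
    then show "\<rho> \<in> add_to x \<tau> ` insert {} \<tau>"
      by (metis add_to_remove_elem image_eqI insertI1)
  qed (use assms in \<open>auto simp: partition_on_add_to remove_elem_add_to\<close>)
  moreover have "inj_on (add_to x \<tau>) (insert {} \<tau>)"
    using add_to_inject[OF assms] by (intro inj_onI) blast
  ultimately show ?thesis
    by (simp only: sum.reindex comp_def)
qed

lemma sum_partitions_blocks:
  assumes "finite N"
  shows "(\<Sum>\<pi>\<in>partitions N. \<Sum>S\<in>\<pi>. g S (\<pi> - {S}))
       = (\<Sum>S | S \<subseteq> N \<and> S \<noteq> {}. \<Sum>\<tau>\<in>partitions (N - S). g S \<tau>)"
proof -
  let ?P = "SIGMA \<pi>:partitions N. \<pi>" and ?Q = "SIGMA S:{S. S \<subseteq> N \<and> S \<noteq> {}}. partitions (N - S)"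
  have block_notin: "S \<notin> \<tau>" if "partition_on (N - S) \<tau>" "S \<noteq> {}" for S \<tau>
    using that unfolding partition_on_def by blast
  have bij: "bij_betw (\<lambda>(\<pi>, S). (S, \<pi> - {S})) ?P ?Q"
  proof (rule bij_betw_byWitness[where f' = "\<lambda>(S, \<tau>). (insert S \<tau>, S)"])
    show "(\<lambda>(\<pi>, S). (S, \<pi> - {S})) ` ?P \<subseteq> ?Q"
      by (auto simp: partition_on_Diff_block) (auto simp: partition_on_def)
    have insert_block: "partition_on N (insert S \<tau>)" if "S \<subseteq> N" "S \<noteq> {}" "partition_on (N - S) \<tau>" for S \<tau>
    proof -
      have "disjnt S (\<Union>\<tau>)"
        using that(3) by (auto simp: partition_on_def disjnt_def)
      then show ?thesis
        using that partition_on_insert by blast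
    qed
    then show "(\<lambda>(S, \<tau>). (insert S \<tau>, S)) ` ?Q \<subseteq> ?P"
      by (auto intro!: insert_block)
  qed (auto simp: insert_absorb block_notin)
  have "(\<Sum>(\<pi>, S)\<in>?P. g S (\<pi> - {S})) = (\<Sum>(S, \<tau>)\<in>?Q. g S \<tau>)"
    using sum.reindex_bij_betw[OF bij, of "\<lambda>(S, \<tau>). g S \<tau>"] by (simp add: case_prod_beta)
  moreover have "finite \<pi>" if "\<pi> \<in> partitions N" for \<pi>
    using assms that finite_elements by auto
  ultimately show ?thesis
    using assms by (simp add: sum.Sigma finite_partitions)
qed

lemma partition_on_singletons_unique:
  assumes "partition_on N \<pi>" "\<And>i. i \<in> N \<Longrightarrow> {i} \<in> \<pi>"
  shows "\<pi> = (\<lambda>i. {i}) ` N"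
proof (intro equalityI subsetI)
  fix X assume X: "X \<in> \<pi>"
  then have "X \<noteq> {}"
    using assms(1) by (auto simp: partition_on_def)
  then obtain i where i: "i \<in> X"
    by blast
  then have "{i} \<in> \<pi>" "i \<in> N"
    using assms X by (auto simp: partition_on_def)
  have "X = {i}"
  proof (rule ccontr)
    assume "X \<noteq> {i}"
    then have "X \<inter> {i} = {}"
      using assms(1) X \<open>{i} \<in> \<pi>\<close> by (auto simp: partition_on_def disjoint_def)
    then show False
      using i by blast
  qed
  then show "X \<in> (\<lambda>i. {i}) ` N"
    using \<open>i \<in> N\<close> by simp
qed (use assms(2) in auto)

lemma isolation_invariant_const:
  assumes "finite N"
    and isolate: "\<And>\<rho> i. partition_on N \<rho> \<Longrightarrow> i \<in> N \<Longrightarrow> q (add_to i (remove_elem i \<rho>) {}) = q \<rho>"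
    and "partition_on N \<rho>"
  shows "q \<rho> = q ((\<lambda>i. {i}) ` N)"
proof -
  have "\<forall>\<rho>. partition_on N \<rho> \<longrightarrow> (\<forall>i\<in>N - K. {i} \<in> \<rho>) \<longrightarrow> q \<rho> = q ((\<lambda>i. {i}) ` N)"
    if "K \<subseteq> N" for K
    using finite_subset[OF that assms(1)] that
  proof (induction K rule: finite_induct)
    case empty
    then show ?case
      using partition_on_singletons_unique by auto
  next
    case (insert k K)
    show ?case
    proof (intro allI impI)
      fix \<rho> assume \<rho>: "partition_on N \<rho>" and singletons: "\<forall>i\<in>N - insert k K. {i} \<in> \<rho>"
      let ?\<rho>' = "add_to k (remove_elem k \<rho>) {}"
      have k: "k \<in> N" using insert.prems by simp
      have "partition_on N ?\<rho>'"
        using partition_on_add_to[OF partition_on_remove_elem[OF \<rho>, of k], of k "{}"] k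
        by (simp add: insert_absorb)
      moreover have "{i} \<in> ?\<rho>'" if "i \<in> N - K" for i
      proof (cases "i = k")
        case False
        then have "{i} - {k} \<in> remove_elem k \<rho>"
          using singletons that unfolding remove_elem_def by blast
        then show ?thesis
          using False by (simp add: add_to_def)
      qed (simp add: add_to_def)
      ultimately have "q ?\<rho>' = q ((\<lambda>i. {i}) ` N)"
        using insert.IH insert.prems by simp
      then show "q \<rho> = q ((\<lambda>i. {i}) ` N)"
        using isolate[OF \<rho> k] by simp
    qed
  qed
  then show ?thesis
    using assms(3) by blast
qed

lemma sum_eq_single:
  assumes "finite A" "a \<in> A" "\<And>x. x \<in> A \<Longrightarrow> x \<noteq> a \<Longrightarrow> f x = 0"
  shows "sum f A = f a"
  using sum.mono_neutral_right[OF assms(1), of "{a}" f] assms by auto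

section \<open>The Ewens distribution\<close>

definition ewens_weight :: "'a set set \<Rightarrow> real" where
  "ewens_weight \<pi> = (\<Prod>B\<in>\<pi>. fact (card B - 1))"

definition join_weight :: "'a set \<Rightarrow> real" where
  "join_weight B = (if B = {} then 1 else real (card B))"

lemma ewens_eq_ewens_weight: "ewens N \<pi> = ewens_weight \<pi> / fact (card N)"
  by (simp add: ewens_def ewens_weight_def)

lemma ewens_weight_pos: "finite \<pi> \<Longrightarrow> ewens_weight \<pi> > 0"
  unfolding ewens_weight_def by (rule prod_pos) auto

lemma ewens_weight_add_to:
  assumes "partition_on A \<pi>" "finite A" "x \<notin> A" "B \<in> insert {} \<pi>"
  shows "ewens_weight (add_to x \<pi> B) = join_weight B * ewens_weight \<pi>"
proof -
  have fin: "finite \<pi>"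
    using assms(1,2) finite_elements by blast
  have x: "x \<notin> X" if "X \<in> \<pi>" for X
    using assms(1,3) that by (auto simp: partition_on_def)
  show ?thesis
  proof (cases "B = {}")
    case True
    have "{x} \<notin> \<pi>"
      using x by blast
    then show ?thesis
      using True fin by (simp add: ewens_weight_def add_to_def join_weight_def)
  next
    case False
    then have B: "B \<in> \<pi>" "card B > 0"
      using assms finite_block[OF assms(1,2)] by (auto simp: partition_on_def)
    have "insert x B \<notin> \<pi> - {B}"
      using x by blast
    then have "ewens_weight (add_to x \<pi> B) = fact (card (insert x B) - 1) * ewens_weight (\<pi> - {B})"
      using False fin by (simp add: ewens_weight_def add_to_def)
    also have "card (insert x B) - 1 = card B"
      using B x by (simp add: card_insert_if card_ge_0_finite)
    also have "ewens_weight \<pi> = fact (card B - 1) * ewens_weight (\<pi> - {B})"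
      using prod.remove[OF fin B(1)] by (simp add: ewens_weight_def)
    ultimately show ?thesis
      using False fact_reduce[OF B(2), where 'a = real] by (simp add: join_weight_def)
  qed
qed

lemma join_weight_pos: "finite B \<Longrightarrow> join_weight B > 0"
  by (simp add: join_weight_def card_gt_0_iff)

lemma sum_join_weight:
  assumes "partition_on A \<pi>" "finite A"
  shows "(\<Sum>B\<in>insert {} \<pi>. join_weight B) = real (card A) + 1"
proof -
  have "{} \<notin> \<pi>" "finite \<pi>"
    using assms partition_onD3 finite_elements by blast+
  moreover have "finite B" if "B \<in> \<pi>" for B
    using assms that by (rule finite_block)
  then have "card A = (\<Sum>B\<in>\<pi>. card B)"
    using product_partition assms(1) by blast
  ultimately show ?thesis
    by (auto simp: join_weight_def intro!: sum.cong)
qed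

text \<open>This is the Chinese restaurant process.\<close>

lemma ewens_add_to:
  assumes "partition_on A \<pi>" "finite A" "x \<notin> A" "B \<in> insert {} \<pi>"
  shows "ewens (insert x A) (add_to x \<pi> B) = join_weight B / (real (card A) + 1) * ewens A \<pi>"
  using assms(2,3) by (simp add: ewens_eq_ewens_weight ewens_weight_add_to[OF assms] field_simps)

lemma sum_ewens_weight: "finite A \<Longrightarrow> (\<Sum>\<pi>\<in>partitions A. ewens_weight \<pi>) = fact (card A)"
proof (induction A rule: finite_induct)
  case empty
  then show ?case
    by (simp add: partitions_empty ewens_weight_def)
next
  case (insert x A)
  have "(\<Sum>\<rho>\<in>partitions (insert x A). ewens_weight \<rho>)
      = (\<Sum>\<pi>\<in>partitions A. \<Sum>B\<in>insert {} \<pi>. join_weight B * ewens_weight \<pi>)"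
    using insert.hyps by (simp add: sum_partitions_insert ewens_weight_add_to)
  also have "\<dots> = (\<Sum>\<pi>\<in>partitions A. (real (card A) + 1) * ewens_weight \<pi>)"
    using insert.hyps by (simp add: sum_join_weight flip: sum_distrib_right)
  also have "\<dots> = fact (card (insert x A))"
    using insert by (simp add: sum_distrib_left[symmetric])
  finally show ?case .
qed

lemma sum_ewens: "finite A \<Longrightarrow> (\<Sum>\<pi>\<in>partitions A. ewens A \<pi>) = 1"
  by (simp add: ewens_eq_ewens_weight sum_ewens_weight flip: sum_divide_distrib)

lemma ewens_pos: "finite A \<Longrightarrow> partition_on A \<pi> \<Longrightarrow> ewens A \<pi> > 0"
  by (simp add: ewens_eq_ewens_weight ewens_weight_pos finite_elements)

lemma random_partition_ewens: "finite U \<Longrightarrow> random_partition U ewens"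
  by (auto simp: random_partition_def sum_ewens less_imp_le[OF ewens_pos] finite_subset)

definition pot_coeff :: "nat \<Rightarrow> nat \<Rightarrow> real" where
  "pot_coeff n s = fact (s - 1) * fact (n - s) / fact n"

lemma pot_eq_pot_coeff: "pot N v = (\<Sum>S | S \<subseteq> N \<and> S \<noteq> {}. pot_coeff (card N) (card S) * v S)"
  by (simp add: pot_def pot_coeff_def)

lemma shapley_eq_pot_coeff:
  "shapley N v i = (\<Sum>S | S \<subseteq> N - {i}. pot_coeff (card N) (Suc (card S)) * (v (insert i S) - v S))"
  by (simp add: shapley_def pot_coeff_def)

lemma pot_coeff_pos: "pot_coeff n s > 0"
  by (simp add: pot_coeff_def)

lemma pot_coeff_Suc:
  assumes "0 < s" "s < n"
  shows "pot_coeff n (Suc s) * real (n - s) = pot_coeff n s * real s"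
proof -
  have "(fact s :: real) = real s * fact (s - 1)"
    using assms by (simp add: fact_reduce)
  moreover have "(fact (n - s) :: real) = real (n - s) * fact (n - Suc s)"
    using assms fact_reduce[of "n - s", where 'a = real] by (simp del: of_nat_diff)
  ultimately show ?thesis
    using assms by (simp add: pot_coeff_def of_nat_diff)
qed

lemma ewens_insert_block:
  assumes "finite N" "S \<subseteq> N" "S \<noteq> {}" "partition_on (N - S) \<tau>"
  shows "ewens N (insert S \<tau>) = pot_coeff (card N) (card S) * ewens (N - S) \<tau>"
proof -
  have "S \<notin> \<tau>"
    using assms(3,4) unfolding partition_on_def by blast
  moreover have "finite \<tau>"
    using assms(1,4) finite_elements by blast
  moreover have "card (N - S) = card N - card S"
    using assms(1,2) by (simp add: card_Diff_subset finite_subset)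
  ultimately show ?thesis
    by (simp add: ewens_eq_ewens_weight ewens_weight_def pot_coeff_def)
qed

lemma expect_eq_sum_blocks:
  assumes "finite N"
  shows "expect p N w = (\<Sum>S | S \<subseteq> N \<and> S \<noteq> {}. \<Sum>\<tau>\<in>partitions (N - S). p N (insert S \<tau>) * w S \<tau>)"
proof -
  have "expect p N w = (\<Sum>\<pi>\<in>partitions N. \<Sum>S\<in>\<pi>. p N (insert S (\<pi> - {S})) * w S (\<pi> - {S}))"
    unfolding expect_def sum_distrib_left by (intro sum.cong) (simp_all add: insert_absorb)
  also have "\<dots> = (\<Sum>S | S \<subseteq> N \<and> S \<noteq> {}. \<Sum>\<tau>\<in>partitions (N - S). p N (insert S \<tau>) * w S \<tau>)"
    using assms by (rule sum_partitions_blocks)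
  finally show ?thesis .
qed

definition mpw_game :: "'a set \<Rightarrow> 'a tux \<Rightarrow> 'a set \<Rightarrow> real" where
  "mpw_game N w S = (\<Sum>\<pi>\<in>partitions (N - S). ewens (N - S) \<pi> * w S \<pi>)"

lemma mpw_eq_shapley_mpw_game: "mpw N w = shapley N (mpw_game N w)"
  by (simp add: fun_eq_iff mpw_def mpw_game_def [abs_def])

lemma expect_ewens:
  assumes "finite N"
  shows "expect ewens N w = pot N (mpw_game N w)"
  unfolding expect_eq_sum_blocks[OF assms] pot_eq_pot_coeff mpw_game_def sum_distrib_left
  using assms by (intro sum.cong) (simp_all add: ewens_insert_block)

lemma generates_potential_ewens: "finite U \<Longrightarrow> generates_potential U ewens"
proof -
  have "mpw_game N (\<lambda>S \<pi>. v S) = v" if "finite N" for N and v :: "'a set \<Rightarrow> real"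
    using that by (simp add: fun_eq_iff mpw_game_def sum_ewens flip: sum_distrib_right)
  then show "finite U \<Longrightarrow> generates_potential U ewens"
    unfolding generates_potential_def by (auto simp: expect_ewens finite_subset)
qed

section \<open>Restriction operators\<close>

lemma aux_game_eq_restr_list:
  assumes "finite N" "T \<subseteq> N"
  obtains xs where "distinct xs" "set xs = N - T" "\<And>r w. aux_game r N w T = restr_list r N w xs T {}"
proof -
  have "\<exists>xs. distinct xs \<and> set xs = N - T"
    using assms(1) finite_distinct_list by blast
  from someI_ex[OF this] show ?thesis
    using that unfolding aux_game_def restr_set_def by blast
qed

definition agree_at :: "'a set \<Rightarrow> 'a set \<Rightarrow> 'a tux \<Rightarrow> 'a tux \<Rightarrow> bool" where
  "agree_at N T w w' \<longleftrightarrow> (\<forall>\<rho>. partition_on (N - T) \<rho> \<longrightarrow> w T \<rho> = w' T \<rho>)"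

lemma agree_at_refl: "agree_at N T w w"
  by (simp add: agree_at_def)

lemma agree_at_sym: "agree_at N T w w' \<Longrightarrow> agree_at N T w' w"
  by (simp add: agree_at_def)

lemma agree_at_trans [trans]: "agree_at N T u v \<Longrightarrow> agree_at N T v w \<Longrightarrow> agree_at N T u w"
  by (simp add: agree_at_def)

lemma agree_at_empty: "agree_at T T w w' \<Longrightarrow> w T {} = w' T {}"
  by (simp add: agree_at_def partition_on_empty)

context
  fixes U :: "'a set" and r :: "'a restr"
  assumes R: "restriction_operator U r"
begin

lemma restriction_tux_game: "N \<subseteq> U \<Longrightarrow> tux_game N w \<Longrightarrow> i \<in> N \<Longrightarrow> tux_game (N - {i}) (r N w i)"
  using R by (simp add: restriction_operator_def)

lemma restriction_cong:
  assumes "N \<subseteq> U" "tux_game N w" "tux_game N w'" "i \<in> N" "embedded (N - {i}) S \<pi>"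
    and "\<And>B. B \<in> insert {} \<pi> \<Longrightarrow> w S (add_to i \<pi> B) = w' S (add_to i \<pi> B)"
  shows "r N w i S \<pi> = r N w' i S \<pi>"
  using R assms unfolding restriction_operator_def by blast

lemma restriction_eq_zero:
  assumes PN: "preserves_null U r"
    and "N \<subseteq> U" "tux_game N w" "i \<in> N" "embedded (N - {i}) S \<tau>"
    and "\<And>B. B \<in> insert {} \<tau> \<Longrightarrow> w S (add_to i \<tau> B) = 0"
  shows "r N w i S \<tau> = 0"
proof -
  have "r N w i S \<tau> = r N (\<lambda>_ _. 0) i S \<tau>"
    using assms(6) by (intro restriction_cong[OF assms(2,3) _ assms(4,5)]) (simp_all add: tux_game_def)
  also have "\<dots> = 0"
    using PN assms(2,4,5) by (simp add: preserves_null_def)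
  finally show ?thesis .
qed

lemma restriction_agree_at:
  assumes "N \<subseteq> U" "tux_game N w" "tux_game N w'" "T \<subseteq> N" "i \<in> N - T" "agree_at N T w w'"
  shows "agree_at (N - {i}) T (r N w i) (r N w' i)"
  unfolding agree_at_def
proof (intro allI impI)
  fix \<rho> assume \<rho>: "partition_on (N - {i} - T) \<rho>"
  have "insert i (N - {i} - T) = N - T"
    using assms(5) by auto
  then have "partition_on (N - T) (add_to i \<rho> B)" if "B \<in> insert {} \<rho>" for B
    using partition_on_add_to[OF \<rho> _ that, of i] by simp
  moreover have "embedded (N - {i}) T \<rho>"
    using assms(4,5) \<rho> by (auto simp: embedded_def)
  ultimately show "r N w i T \<rho> = r N w' i T \<rho>"
    using assms(5,6) unfolding agree_at_def by (intro restriction_cong[OF assms(1-3)]) auto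
qed

lemma restr_list_agree_at:
  "N \<subseteq> U \<Longrightarrow> tux_game N w \<Longrightarrow> tux_game N w' \<Longrightarrow> T \<subseteq> N \<Longrightarrow> distinct xs \<Longrightarrow> set xs \<subseteq> N - T \<Longrightarrow>
   agree_at N T w w' \<Longrightarrow> agree_at (N - set xs) T (restr_list r N w xs) (restr_list r N w' xs)"
proof (induction xs arbitrary: N w w')
  case (Cons x xs)
  then have "agree_at (N - {x} - set xs) T (restr_list r (N - {x}) (r N w x) xs) (restr_list r (N - {x}) (r N w' x) xs)"
    by (intro Cons.IH) (auto intro: restriction_tux_game restriction_agree_at)
  then show ?case
    by (simp add: Diff_insert2 [symmetric])
qed simp

lemma aux_game_cong:
  assumes "finite N" "N \<subseteq> U" "tux_game N w" "tux_game N w'" "T \<subseteq> N" "agree_at N T w w'"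
  shows "aux_game r N w T = aux_game r N w' T"
proof -
  obtain xs where xs: "distinct xs" "set xs = N - T" "\<And>r w. aux_game r N w T = restr_list r N w xs T {}"
    using aux_game_eq_restr_list[OF assms(1,5)] by metis
  have "N - set xs = T"
    using xs(2) assms(5) by auto
  then show ?thesis
    using restr_list_agree_at[OF assms(2-5) xs(1) _ assms(6)] xs(2,3) by (simp add: agree_at_empty)
qed

lemma restriction_agree_at_zero:
  assumes "preserves_null U r" "N \<subseteq> U" "tux_game N w" "T \<subseteq> N" "i \<in> N - T"
    and "agree_at N T w (\<lambda>_ _. 0)"
  shows "agree_at (N - {i}) T (r N w i) (\<lambda>_ _. 0)"
proof -
  have "agree_at (N - {i}) T (r N w i) (r N (\<lambda>_ _. 0) i)"
    using restriction_agree_at[OF assms(2,3) _ assms(4-6)] by (simp add: tux_game_def)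
  also have "agree_at (N - {i}) T (r N (\<lambda>_ _. 0) i) (\<lambda>_ _. 0)"
  proof -
    have "T \<subseteq> N - {i}"
      using assms(4,5) by blast
    then show ?thesis
      using assms(1,2,5) by (simp add: agree_at_def preserves_null_def embedded_def)
  qed
  finally show ?thesis .
qed

lemma restr_list_agree_at_zero:
  "preserves_null U r \<Longrightarrow> N \<subseteq> U \<Longrightarrow> tux_game N w \<Longrightarrow> T \<subseteq> N \<Longrightarrow> distinct xs \<Longrightarrow>
   set xs \<subseteq> N - T \<Longrightarrow> agree_at N T w (\<lambda>_ _. 0) \<Longrightarrow>
   agree_at (N - set xs) T (restr_list r N w xs) (\<lambda>_ _. 0)"
proof (induction xs arbitrary: N w)
  case (Cons x xs)
  then have "agree_at (N - {x} - set xs) T (restr_list r (N - {x}) (r N w x) xs) (\<lambda>_ _. 0)"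
    by (intro Cons.IH) (auto intro: restriction_tux_game restriction_agree_at_zero)
  then show ?case
    by (simp add: Diff_insert2 [symmetric])
qed simp

lemma aux_game_eq_zero:
  assumes "preserves_null U r" "finite N" "N \<subseteq> U" "tux_game N w" "T \<subseteq> N"
    and "agree_at N T w (\<lambda>_ _. 0)"
  shows "aux_game r N w T = 0"
proof -
  obtain xs where xs: "distinct xs" "set xs = N - T" "\<And>r w. aux_game r N w T = restr_list r N w xs T {}"
    using aux_game_eq_restr_list[OF assms(2,5)] by metis
  have "N - set xs = T"
    using xs(2) assms(5) by auto
  then show ?thesis
    using restr_list_agree_at_zero[OF assms(1,3,4,5) xs(1) _ assms(6)] xs(2,3)
    by (simp add: agree_at_empty)
qed

context
  assumes PI: "path_independent U r"
begin

lemma restr_list_swap: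
  assumes "N \<subseteq> U" "tux_game N w" "a \<in> N" "b \<in> N" "a \<noteq> b" "T \<subseteq> N - {a, b}"
    and "distinct zs" "set zs \<subseteq> N - {a, b} - T"
  shows "agree_at (N - {a, b} - set zs) T (restr_list r N w (a # b # zs)) (restr_list r N w (b # a # zs))"
proof -
  let ?w\<^sub>a = "r (N - {a}) (r N w a) b" and ?w\<^sub>b = "r (N - {b}) (r N w b) a"
  have M: "N - {a} - {b} = N - {a, b}" "N - {b} - {a} = N - {a, b}"
    by auto
  have "tux_game (N - {a} - {b}) ?w\<^sub>a" "tux_game (N - {b} - {a}) ?w\<^sub>b"
    using assms(1-5) by (auto intro!: restriction_tux_game)
  moreover have "agree_at (N - {a, b}) T ?w\<^sub>a ?w\<^sub>b"
    using PI[unfolded path_independent_def, rule_format, OF assms(1-5)] assms(6)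
    by (simp add: agree_at_def embedded_def)
  ultimately have "agree_at (N - {a, b} - set zs) T (restr_list r (N - {a, b}) ?w\<^sub>a zs) (restr_list r (N - {a, b}) ?w\<^sub>b zs)"
    using assms(1,6-8) unfolding M by (intro restr_list_agree_at) auto
  then show ?thesis
    by (simp add: M)
qed

lemma restr_list_move_to_front:
  "N \<subseteq> U \<Longrightarrow> tux_game N w \<Longrightarrow> T \<subseteq> N \<Longrightarrow> distinct (ys @ x # zs) \<Longrightarrow> set (ys @ x # zs) \<subseteq> N - T \<Longrightarrow>
   agree_at (N - set (ys @ x # zs)) T (restr_list r N w (ys @ x # zs)) (restr_list r N w (x # ys @ zs))"
proof (induction ys arbitrary: N w)
  case Nil
  then show ?case
    by (simp add: agree_at_refl)
next
  case (Cons y ys)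
  have "agree_at (N - {y} - set (ys @ x # zs)) T
      (restr_list r (N - {y}) (r N w y) (ys @ x # zs)) (restr_list r (N - {y}) (r N w y) (x # ys @ zs))"
    by (rule Cons.IH) (use Cons.prems in \<open>auto intro: restriction_tux_game\<close>)
  moreover have "agree_at (N - {y, x} - set (ys @ zs)) T
      (restr_list r N w (y # x # ys @ zs)) (restr_list r N w (x # y # ys @ zs))"
    by (rule restr_list_swap) (use Cons.prems in auto)
  moreover have "N - {y} - set (ys @ x # zs) = N - set ((y # ys) @ x # zs)"
    "N - {y, x} - set (ys @ zs) = N - set ((y # ys) @ x # zs)"
    by auto
  ultimately show ?case
    by (simp only: restr_list.simps append_Cons agree_at_trans)
qed

lemma restr_list_perm:
  "N \<subseteq> U \<Longrightarrow> tux_game N w \<Longrightarrow> T \<subseteq> N \<Longrightarrow> distinct xs \<Longrightarrow> distinct ys \<Longrightarrow> set xs = set ys \<Longrightarrow>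
   set xs \<subseteq> N - T \<Longrightarrow> agree_at (N - set xs) T (restr_list r N w xs) (restr_list r N w ys)"
proof (induction xs arbitrary: ys N w)
  case Nil
  then show ?case
    by (simp add: agree_at_refl)
next
  case (Cons x xs)
  obtain ys\<^sub>1 ys\<^sub>2 where ys: "ys = ys\<^sub>1 @ x # ys\<^sub>2"
    using Cons.prems(6) split_list[of x ys] by auto
  have "agree_at (N - {x} - set xs) T
      (restr_list r (N - {x}) (r N w x) xs) (restr_list r (N - {x}) (r N w x) (ys\<^sub>1 @ ys\<^sub>2))"
    by (rule Cons.IH) (use Cons.prems in \<open>auto simp: ys intro: restriction_tux_game\<close>)
  moreover have "agree_at (N - set (ys\<^sub>1 @ x # ys\<^sub>2)) T
      (restr_list r N w (ys\<^sub>1 @ x # ys\<^sub>2)) (restr_list r N w (x # ys\<^sub>1 @ ys\<^sub>2))"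
    by (rule restr_list_move_to_front) (use Cons.prems in \<open>auto simp: ys\<close>)
  moreover have "N - {x} - set xs = N - set (x # xs)" "N - set (ys\<^sub>1 @ x # ys\<^sub>2) = N - set (x # xs)"
    using Cons.prems(6) unfolding ys by auto
  ultimately show ?case
    unfolding ys by (metis agree_at_sym agree_at_trans restr_list.simps(2))
qed

lemma aux_game_restriction:
  assumes "finite N" "N \<subseteq> U" "tux_game N w" "i \<in> N" "S \<subseteq> N - {i}"
  shows "aux_game r (N - {i}) (r N w i) S = aux_game r N w S"
proof -
  obtain xs where xs: "distinct xs" "set xs = N - S" "\<And>r w. aux_game r N w S = restr_list r N w xs S {}"
    using aux_game_eq_restr_list[OF assms(1)] assms(5) by blast
  obtain ys where ys: "distinct ys" "set ys = N - {i} - S"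
    "\<And>r w. aux_game r (N - {i}) w S = restr_list r (N - {i}) w ys S {}"
    using aux_game_eq_restr_list[of "N - {i}" S] assms(1,5) by blast
  have "agree_at (N - set (i # ys)) S (restr_list r N w (i # ys)) (restr_list r N w xs)"
    by (rule restr_list_perm) (use assms xs ys in auto)
  moreover have "N - set (i # ys) = S"
    using ys(2) assms(5) by auto
  ultimately have "restr_list r N w (i # ys) S {} = restr_list r N w xs S {}"
    by (simp add: agree_at_empty)
  then show ?thesis
    by (simp add: xs(3) ys(3))
qed

end

end

lemma null_player_property_if_monotonic:
  assumes "finite U" "restriction_operator U r" "preserves_null U r" "monotonic U (shapley_r r)"
  shows "null_player_property U (shapley_r r)"
  unfolding null_player_property_def
proof (intro allI impI)
  fix N w i assume "N \<subseteq> U" "tux_game N w" "i \<in> N" "null_player N w i"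
  have N: "finite N"
    using \<open>N \<subseteq> U\<close> assms(1) finite_subset by blast
  have zero: "tux_game N (\<lambda>_ _. 0)"
    by (simp add: tux_game_def)
  have "aux_game r N (\<lambda>_ _. 0) S = 0" if "S \<subseteq> N" for S
    using aux_game_eq_zero[OF assms(2,3) N \<open>N \<subseteq> U\<close> zero that] by (simp add: agree_at_def)
  moreover have "S \<subseteq> N" "insert i S \<subseteq> N" if "S \<subseteq> N - {i}" for S
    using that \<open>i \<in> N\<close> by auto
  ultimately have "shapley_r r N (\<lambda>_ _. 0) i = 0"
    unfolding shapley_r_def shapley_def by (intro sum.neutral) simp
  moreover have "w S (add_to i \<pi> B) = w (insert i S) \<pi>"
    if "embedded (N - {i}) S \<pi>" "B \<in> insert {} \<pi>" for S \<pi> B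
    using \<open>null_player N w i\<close>[unfolded null_player_def, rule_format, OF that] by simp
  then have "shapley_r r N w i \<ge> shapley_r r N (\<lambda>_ _. 0) i" "shapley_r r N (\<lambda>_ _. 0) i \<ge> shapley_r r N w i"
    using \<open>N \<subseteq> U\<close> \<open>tux_game N w\<close> zero \<open>i \<in> N\<close>
    by (auto intro!: assms(4)[unfolded monotonic_def, rule_format])
  ultimately show "shapley_r r N w i = 0"
    by simp
qed

lemma admissible_restrictionD:
  assumes "admissible_restriction U p r"
  shows "restriction_operator U r" "path_independent U r" "preserves_null U r"
    "\<And>N w. N \<subseteq> U \<Longrightarrow> tux_game N w \<Longrightarrow> pot_r r N w = expect p N w"
  using assms by (simp_all add: admissible_restriction_def)

lemma admissible_restriction_null_player_property:
  "finite U \<Longrightarrow> admissible_restriction U p r \<Longrightarrow> null_player_property U (shapley_r r)"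
  using null_player_property_if_monotonic by (auto simp: admissible_restriction_def)

section \<open>The restriction operator \<open>r_star\<close>\<close>

lemma r_star_eq_join_weight:
  assumes "finite N" "i \<in> N" "S \<subseteq> N - {i}" "partition_on (N - {i} - S) \<tau>"
  shows "r_star N w i S \<tau> = (\<Sum>B\<in>insert {} \<tau>. join_weight B * w S (add_to i \<tau> B)) / real (card (N - S))"
proof -
  have "{} \<notin> \<tau>" "finite \<tau>"
    using assms(1,4) partition_onD3 finite_elements by blast+
  moreover have "(\<Sum>B\<in>\<tau>. join_weight B * w S (add_to i \<tau> B)) = (\<Sum>B\<in>\<tau>. real (card B) * w S (add_to i \<tau> B))"
    using \<open>{} \<notin> \<tau>\<close> by (intro sum.cong) (auto simp: join_weight_def)
  moreover have "card N - card S = card (N - S)"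
    using assms(3) card_Diff_subset[OF finite_subset[OF _ assms(1)]] by (metis Diff_subset order_trans)
  ultimately show ?thesis
    by (simp add: r_star_def join_weight_def add_divide_distrib sum_divide_distrib)
qed

lemma ewens_mul_r_star:
  assumes "finite N" "i \<in> N" "S \<subseteq> N - {i}" "partition_on (N - {i} - S) \<tau>"
  shows "ewens (N - {i} - S) \<tau> * r_star N w i S \<tau>
       = (\<Sum>B\<in>insert {} \<tau>. ewens (N - S) (add_to i \<tau> B) * w S (add_to i \<tau> B))"
proof -
  let ?A = "N - {i} - S"
  have N_S: "N - S = insert i ?A"
    using assms(2,3) by auto
  have "ewens (N - S) (add_to i \<tau> B) = join_weight B / real (card (N - S)) * ewens ?A \<tau>"
    if "B \<in> insert {} \<tau>" for B
    using ewens_add_to[OF assms(4) _ _ that] assms(1) by (simp add: N_S)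
  then show ?thesis
    by (simp add: r_star_eq_join_weight[OF assms] sum_distrib_left sum_divide_distrib mult_ac)
qed

text \<open>\<open>r_star N w i S \<tau>\<close> is the conditional expectation of \<open>w S\<close> under the Ewens distribution
  on \<open>N - S\<close>, given that the partition restricted to \<open>N - S - {i}\<close> is \<open>\<tau>\<close>.\<close>

lemma ewens_mul_r_star_fibre:
  assumes "finite N" "i \<in> N" "S \<subseteq> N - {i}" "partition_on (N - {i} - S) \<tau>"
  shows "ewens (N - {i} - S) \<tau> * r_star N w i S \<tau>
       = (\<Sum>\<rho>\<in>{\<rho> \<in> partitions (N - S). remove_elem i \<rho> = \<tau>}. ewens (N - S) \<rho> * w S \<rho>)"
proof -
  have "N - S = insert i (N - {i} - S)"
    using assms(2,3) by auto
  then show ?thesis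
    using sum_remove_elem_fibre[OF assms(4), of i "\<lambda>\<rho>. ewens (N - S) \<rho> * w S \<rho>"]
    by (simp add: ewens_mul_r_star[OF assms])
qed

lemma mpw_game_r_star:
  assumes "finite N" "i \<in> N" "S \<subseteq> N - {i}"
  shows "mpw_game (N - {i}) (r_star N w i) S = mpw_game N w S"
proof -
  let ?A = "N - {i} - S"
  have "mpw_game (N - {i}) (r_star N w i) S
      = (\<Sum>\<tau>\<in>partitions ?A. \<Sum>B\<in>insert {} \<tau>. ewens (N - S) (add_to i \<tau> B) * w S (add_to i \<tau> B))"
    unfolding mpw_game_def using assms by (intro sum.cong) (simp_all add: ewens_mul_r_star)
  also have "\<dots> = (\<Sum>\<rho>\<in>partitions (insert i ?A). ewens (N - S) \<rho> * w S \<rho>)"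
    using assms(1) by (simp add: sum_partitions_insert)
  also have "insert i ?A = N - S"
    using assms(2,3) by auto
  finally show ?thesis
    by (simp add: mpw_game_def)
qed

lemma restr_list_r_star:
  "finite N \<Longrightarrow> S \<subseteq> N \<Longrightarrow> distinct xs \<Longrightarrow> set xs = N - S \<Longrightarrow>
   restr_list r_star N w xs S {} = mpw_game N w S"
proof (induction xs arbitrary: N w)
  case Nil
  then have "N - S = {}"
    by simp
  then show ?case
    by (simp only: mpw_game_def) (simp add: partitions_empty ewens_def)
next
  case (Cons x xs)
  have "set xs = N - {x} - S" "distinct xs" "x \<in> N" "S \<subseteq> N - {x}"
    using Cons.prems by auto
  then have "restr_list r_star N w (x # xs) S {} = mpw_game (N - {x}) (r_star N w x) S"
    using Cons.IH Cons.prems(1) \<open>S \<subseteq> N - {x}\<close> by simp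
  also have "\<dots> = mpw_game N w S"
    using Cons.prems(1) \<open>x \<in> N\<close> \<open>S \<subseteq> N - {x}\<close> by (rule mpw_game_r_star)
  finally show ?case .
qed

lemma aux_game_r_star:
  assumes "finite N" "S \<subseteq> N"
  shows "aux_game r_star N w S = mpw_game N w S"
proof -
  obtain xs where "distinct xs" "set xs = N - S" "aux_game r_star N w S = restr_list r_star N w xs S {}"
    using aux_game_eq_restr_list[OF assms] by metis
  then show ?thesis
    using restr_list_r_star[OF assms] by simp
qed

lemma pot_r_r_star: "finite N \<Longrightarrow> pot_r r_star N w = expect ewens N w"
  unfolding pot_r_def expect_ewens pot_def by (intro sum.cong) (auto simp: aux_game_r_star)

lemma shapley_r_r_star:
  assumes "finite N" "i \<in> N"
  shows "shapley_r r_star N w i = mpw N w i"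
proof -
  have "S \<subseteq> N" "insert i S \<subseteq> N" if "S \<subseteq> N - {i}" for S
    using assms(2) that by auto
  then show ?thesis
    unfolding shapley_r_def mpw_def shapley_def
    using assms(1) by (intro sum.cong) (simp_all add: aux_game_r_star mpw_game_def)
qed

lemma restriction_operator_r_star: "restriction_operator U r_star"
  unfolding restriction_operator_def
proof (intro allI impI conjI)
  fix N w i assume "N \<subseteq> U" "tux_game N w" "i \<in> N"
  have "w {} (add_to i \<pi> B) = 0" if "partition_on (N - {i}) \<pi>" "B \<in> insert {} \<pi>" for \<pi> B
    using partition_on_add_to[OF that(1) _ that(2), of i] \<open>tux_game N w\<close> \<open>i \<in> N\<close>
    by (simp add: tux_game_def insert_absorb)
  then show "tux_game (N - {i}) (r_star N w i)"
    by (simp add: tux_game_def r_star_def)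
qed (auto simp: r_star_def intro!: sum.cong)

lemma preserves_null_r_star: "preserves_null U r_star"
  by (simp add: preserves_null_def r_star_def)

lemma ewens_mul_r_star_twice:
  assumes "finite N" "i \<in> N" "j \<in> N" "i \<noteq> j" "S \<subseteq> N - {i, j}" "partition_on (N - {i, j} - S) \<pi>"
  shows "ewens (N - {i, j} - S) \<pi> * r_star (N - {i}) (r_star N w i) j S \<pi>
       = (\<Sum>\<rho>\<in>{\<rho> \<in> partitions (N - S). remove_elem j (remove_elem i \<rho>) = \<pi>}. ewens (N - S) \<rho> * w S \<rho>)"
proof -
  let ?f = "\<lambda>\<rho>. ewens (N - S) \<rho> * w S \<rho>"
  let ?\<Sigma> = "{\<sigma> \<in> partitions (N - {i} - S). remove_elem j \<sigma> = \<pi>}"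
  let ?R = "{\<rho> \<in> partitions (N - S). remove_elem j (remove_elem i \<rho>) = \<pi>}"
  have "N - {i} - {j} - S = N - {i, j} - S"
    by auto
  then have "ewens (N - {i, j} - S) \<pi> * r_star (N - {i}) (r_star N w i) j S \<pi>
      = (\<Sum>\<sigma>\<in>?\<Sigma>. ewens (N - {i} - S) \<sigma> * r_star N w i S \<sigma>)"
    using ewens_mul_r_star_fibre[of "N - {i}" j S \<pi> "r_star N w i"] assms by auto
  also have "\<dots> = (\<Sum>\<sigma>\<in>?\<Sigma>. \<Sum>\<rho>\<in>{\<rho> \<in> partitions (N - S). remove_elem i \<rho> = \<sigma>}. ?f \<rho>)"
    using assms by (intro sum.cong refl ewens_mul_r_star_fibre) auto
  also have "\<dots> = (\<Sum>\<sigma>\<in>?\<Sigma>. \<Sum>\<rho>\<in>{\<rho> \<in> ?R. remove_elem i \<rho> = \<sigma>}. ?f \<rho>)"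
    by (intro sum.cong refl) auto
  also have "\<dots> = (\<Sum>\<rho>\<in>?R. ?f \<rho>)"
  proof (rule sum.group)
    have "N - S - {i} = N - {i} - S"
      by blast
    then have "partition_on (N - {i} - S) (remove_elem i \<rho>)" if "partition_on (N - S) \<rho>" for \<rho>
      using partition_on_remove_elem[OF that, of i] by simp
    then show "remove_elem i ` ?R \<subseteq> ?\<Sigma>"
      by auto
  qed (use assms(1) in \<open>simp_all add: finite_Collect_conjI finitely_many_partition_on\<close>)
  finally show ?thesis .
qed

lemma path_independent_r_star: "finite U \<Longrightarrow> path_independent U r_star"
  unfolding path_independent_def
proof (intro allI impI)
  fix N w i j S \<pi>
  assume "finite U" "N \<subseteq> U" "tux_game N w" "i \<in> N" "j \<in> N" "i \<noteq> j" "embedded (N - {i, j}) S \<pi>"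
  then have N: "finite N" and S: "S \<subseteq> N - {i, j}" "S \<subseteq> N - {j, i}"
    and \<pi>: "partition_on (N - {i, j} - S) \<pi>" "partition_on (N - {j, i} - S) \<pi>"
    by (auto simp: embedded_def finite_subset insert_commute)
  have "ewens (N - {i, j} - S) \<pi> * r_star (N - {i}) (r_star N w i) j S \<pi>
      = ewens (N - {i, j} - S) \<pi> * r_star (N - {j}) (r_star N w j) i S \<pi>"
    using ewens_mul_r_star_twice[OF N \<open>i \<in> N\<close> \<open>j \<in> N\<close> \<open>i \<noteq> j\<close> S(1) \<pi>(1)]
      ewens_mul_r_star_twice[OF N \<open>j \<in> N\<close> \<open>i \<in> N\<close> \<open>i \<noteq> j\<close>[symmetric] S(2) \<pi>(2)]
    by (simp add: remove_elem_commute insert_commute)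
  moreover have "ewens (N - {i, j} - S) \<pi> > 0"
    using N \<pi>(1) by (simp add: ewens_pos)
  ultimately show "r_star (N - {i}) (r_star N w i) j S \<pi> = r_star (N - {j}) (r_star N w j) i S \<pi>"
    by simp
qed

lemma r_star_const:
  assumes "finite N" "i \<in> N" "S \<subseteq> N - {i}" "partition_on (N - {i} - S) \<tau>"
    and "\<And>B. B \<in> insert {} \<tau> \<Longrightarrow> w S (add_to i \<tau> B) = c"
  shows "r_star N w i S \<tau> = c"
proof -
  have "N - S = insert i (N - {i} - S)"
    using assms(2,3) by auto
  then have "real (card (N - S)) = real (card (N - {i} - S)) + 1"
    using assms(1) by simp
  moreover have "(\<Sum>B\<in>insert {} \<tau>. join_weight B * w S (add_to i \<tau> B)) = (\<Sum>B\<in>insert {} \<tau>. join_weight B * c)"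
    using assms(5) by (intro sum.cong) auto
  moreover have "\<dots> = (\<Sum>B\<in>insert {} \<tau>. join_weight B) * c"
    by (simp add: sum_distrib_right)
  ultimately show ?thesis
    using assms(1) by (simp add: r_star_eq_join_weight[OF assms(1-4)] sum_join_weight[OF assms(4)])
qed

lemma null_player_property_r_star: "finite U \<Longrightarrow> null_player_property U (shapley_r r_star)"
  unfolding null_player_property_def
proof (intro allI impI)
  fix N w i assume "finite U" "N \<subseteq> U" "tux_game N w" "i \<in> N" "null_player N w i"
  then have N: "finite N"
    by (simp add: finite_subset)
  have "mpw_game N w (insert i S) = mpw_game N w S" if S: "S \<subseteq> N - {i}" for S
  proof -
    have "mpw_game N w S = mpw_game (N - {i}) (r_star N w i) S"
      using mpw_game_r_star[OF N \<open>i \<in> N\<close> S] by simp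
    also have "\<dots> = mpw_game N w (insert i S)"
      unfolding mpw_game_def Diff_insert2 [of N i S]
    proof (intro sum.cong refl)
      fix \<tau> assume "\<tau> \<in> partitions (N - {i} - S)"
      then have \<tau>: "partition_on (N - {i} - S) \<tau>"
        by simp
      have "w S (add_to i \<tau> B) = w (insert i S) \<tau>" if "B \<in> insert {} \<tau>" for B
        using \<open>null_player N w i\<close>[unfolded null_player_def, rule_format, of S \<tau> B] S \<tau> that
        by (simp add: embedded_def)
      then have "r_star N w i S \<tau> = w (insert i S) \<tau>"
        by (rule r_star_const[OF N \<open>i \<in> N\<close> S \<tau>])
      then show "ewens (N - {i} - S) \<tau> * r_star N w i S \<tau> = ewens (N - {i} - S) \<tau> * w (insert i S) \<tau>"
        by simp
    qed
    finally show ?thesis ..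
  qed
  then show "shapley_r r_star N w i = 0"
    by (simp add: shapley_r_r_star[OF N \<open>i \<in> N\<close>] mpw_eq_shapley_mpw_game shapley_def)
qed

lemma admissible_restriction_r_star: "finite U \<Longrightarrow> admissible_restriction U ewens r_star"
  by (simp add: admissible_restriction_def restriction_operator_r_star path_independent_r_star
      preserves_null_r_star pot_r_r_star null_player_property_r_star finite_subset)

section \<open>Uniqueness\<close>

lemma shapley_two_coalitions:
  assumes "finite N" "i \<in> N" "X \<subseteq> N - {i}"
    and "\<And>S. S \<subseteq> N \<Longrightarrow> S \<noteq> X \<Longrightarrow> S \<noteq> insert i X \<Longrightarrow> v S = 0"
  shows "shapley N v i = pot_coeff (card N) (Suc (card X)) * (v (insert i X) - v X)"
  unfolding shapley_eq_pot_coeff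
proof (rule sum_eq_single)
  fix S assume S: "S \<in> {S. S \<subseteq> N - {i}}" "S \<noteq> X"
  moreover have "i \<notin> S" "i \<notin> X"
    using S(1) assms(3) by auto
  ultimately have "insert i S \<noteq> X" "insert i S \<noteq> insert i X" "S \<noteq> insert i X"
    by (blast, metis insert_ident, blast)
  moreover have "insert i S \<subseteq> N" "S \<subseteq> N"
    using S(1) assms(2) by auto
  ultimately have "v (insert i S) = 0" "v S = 0"
    using S(2) assms(4) by simp_all
  then show "pot_coeff (card N) (Suc (card S)) * (v (insert i S) - v S) = 0"
    by simp
qed (use assms in auto)

text \<open>Player \<open>i\<close> is null in this game, yet the game tells apart \<open>i\<close> joining the block \<open>X\<close>
  of \<open>insert X \<tau>\<close> from \<open>i\<close> joining any other block or staying alone.\<close>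

definition null_indicator_game :: "'a \<Rightarrow> 'a set \<Rightarrow> 'a set set \<Rightarrow> 'a tux" where
  "null_indicator_game i X \<tau> S \<rho> =
     (if S = insert i X \<and> \<rho> = \<tau> \<or> S = X \<and> remove_elem i \<rho> = \<tau> then 1 else 0)"

lemma tux_game_null_indicator_game: "X \<noteq> {} \<Longrightarrow> tux_game N (null_indicator_game i X \<tau>)"
  by (simp add: tux_game_def null_indicator_game_def)

lemma null_player_null_indicator_game:
  assumes "i \<notin> X"
  shows "null_player N (null_indicator_game i X \<tau>) i"
  unfolding null_player_def
proof (intro allI impI ballI)
  fix S \<pi> B assume "embedded (N - {i}) S \<pi>" "B \<in> insert {} \<pi>"
  then have "i \<notin> S" "remove_elem i (add_to i \<pi> B) = \<pi>"
    using remove_elem_add_to[of "N - {i} - S" \<pi> i B] by (auto simp: embedded_def)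
  moreover have "insert i S = insert i X \<longleftrightarrow> S = X"
    using \<open>i \<notin> S\<close> assms by (metis insert_ident)
  ultimately show "null_indicator_game i X \<tau> (insert i S) \<pi> = null_indicator_game i X \<tau> S (add_to i \<pi> B)"
    using assms by (auto simp: null_indicator_game_def)
qed

lemma insert_block_add_to_Diff:
  assumes "X \<in> \<sigma>" "X \<noteq> {}" "B \<in> insert {} \<sigma>" "B \<noteq> X"
  shows "insert X (add_to i (\<sigma> - {X}) B) = add_to i \<sigma> B"
  using assms by (auto simp: add_to_def insert_commute insert_absorb)

context
  fixes U :: "'a set" and p :: "'a rpart" and r :: "'a restr"
  assumes U: "finite U"
    and R: "restriction_operator U r" and PN: "preserves_null U r"
    and POT: "\<And>N w. N \<subseteq> U \<Longrightarrow> tux_game N w \<Longrightarrow> pot_r r N w = expect p N w"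
begin

lemma pot_coeff_mul_aux_game:
  assumes "N \<subseteq> U" "tux_game N w" "T \<subseteq> N" "T \<noteq> {}"
  shows "pot_coeff (card N) (card T) * aux_game r N w T
       = (\<Sum>\<tau>\<in>partitions (N - T). p N (insert T \<tau>) * w T \<tau>)"
proof -
  define w\<^sub>T where "w\<^sub>T = (\<lambda>S \<pi>. if S = T then w S \<pi> else 0)"
  have N: "finite N"
    using assms(1) U finite_subset by blast
  have w\<^sub>T: "tux_game N w\<^sub>T"
    using assms(4) by (simp add: w\<^sub>T_def tux_game_def)
  have "aux_game r N w\<^sub>T S = 0" if "S \<subseteq> N" "S \<noteq> T" for S
    using that by (intro aux_game_eq_zero[OF R PN N assms(1) w\<^sub>T]) (simp_all add: agree_at_def w\<^sub>T_def)
  moreover have "aux_game r N w\<^sub>T T = aux_game r N w T"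
    by (rule aux_game_cong[OF R N assms(1) w\<^sub>T assms(2,3)]) (simp add: agree_at_def w\<^sub>T_def)
  ultimately have "pot_r r N w\<^sub>T = pot_coeff (card N) (card T) * aux_game r N w T"
    unfolding pot_r_def pot_eq_pot_coeff using N assms(3,4) by (subst sum_eq_single[of _ T]) auto
  moreover have "expect p N w\<^sub>T = (\<Sum>\<tau>\<in>partitions (N - T). p N (insert T \<tau>) * w T \<tau>)"
    unfolding expect_eq_sum_blocks[OF N] using N assms(3,4) by (subst sum_eq_single[of _ T]) (auto simp: w\<^sub>T_def)
  ultimately show ?thesis
    using POT[OF assms(1) w\<^sub>T] by simp
qed

lemma aux_game_null_indicator_game:
  assumes NP: "null_player_property U (shapley_r r)"
    and "N \<subseteq> U" "i \<in> N" "X \<subseteq> N - {i}" "X \<noteq> {}"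
  shows "aux_game r N (null_indicator_game i X \<tau>) (insert i X) = aux_game r N (null_indicator_game i X \<tau>) X"
proof -
  let ?w = "null_indicator_game i X \<tau>"
  have N: "finite N"
    using assms(2) U finite_subset by blast
  have w: "tux_game N ?w" "null_player N ?w i"
    using assms(4,5) by (auto intro: tux_game_null_indicator_game null_player_null_indicator_game)
  have "aux_game r N ?w S = 0" if "S \<subseteq> N" "S \<noteq> X" "S \<noteq> insert i X" for S
    using that by (intro aux_game_eq_zero[OF R PN N assms(2) w(1)])
      (simp_all add: agree_at_def null_indicator_game_def)
  then have "shapley_r r N ?w i
      = pot_coeff (card N) (Suc (card X)) * (aux_game r N ?w (insert i X) - aux_game r N ?w X)"
    unfolding shapley_r_def using N assms(3,4) by (intro shapley_two_coalitions) auto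
  moreover have "shapley_r r N ?w i = 0"
    using NP assms(2,3) w unfolding null_player_property_def by blast
  ultimately show ?thesis
    using pot_coeff_pos[of "card N" "Suc (card X)"] by simp
qed

lemma pot_coeff_mul_aux_null_indicator_game_insert:
  assumes "N \<subseteq> U" "i \<in> N" "X \<subseteq> N - {i}" "X \<noteq> {}" "partition_on (N - {i} - X) \<tau>"
  shows "pot_coeff (card N) (Suc (card X)) * aux_game r N (null_indicator_game i X \<tau>) (insert i X)
       = p N (insert (insert i X) \<tau>)"
proof -
  let ?w = "null_indicator_game i X \<tau>"
  have N: "finite N"
    using assms(1) U finite_subset by blast
  have X: "insert i X \<subseteq> N" "insert i X \<noteq> X" "N - insert i X = N - {i} - X"
    using assms(2,3) by auto
  have "finite X" "i \<notin> X"
    using assms(3) finite_subset[OF _ N] by auto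
  then have "card (insert i X) = Suc (card X)"
    by simp
  then have "pot_coeff (card N) (Suc (card X)) * aux_game r N ?w (insert i X)
      = (\<Sum>\<tau>'\<in>partitions (N - {i} - X). p N (insert (insert i X) \<tau>') * ?w (insert i X) \<tau>')"
    using pot_coeff_mul_aux_game[OF assms(1) tux_game_null_indicator_game[OF assms(4)] X(1)] X(3)
    by simp
  also have "\<dots> = p N (insert (insert i X) \<tau>)"
    using N assms(5) X(2) by (subst sum_eq_single[of _ \<tau>])
      (simp_all add: finite_partitions null_indicator_game_def)
  finally show ?thesis .
qed

lemma pot_coeff_mul_aux_null_indicator_game:
  assumes "N \<subseteq> U" "i \<in> N" "X \<subseteq> N - {i}" "X \<noteq> {}" "partition_on (N - {i} - X) \<tau>"
  shows "pot_coeff (card N) (card X) * aux_game r N (null_indicator_game i X \<tau>) X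
       = (\<Sum>B\<in>insert {} \<tau>. p N (insert X (add_to i \<tau> B)))"
proof -
  let ?w = "null_indicator_game i X \<tau>" and ?A = "N - {i} - X"
  have N: "finite N"
    using assms(1) U finite_subset by blast
  have X: "X \<subseteq> N" "insert i X \<noteq> X" "N - X = insert i ?A"
    using assms(2,3) by auto
  have "pot_coeff (card N) (card X) * aux_game r N ?w X
      = (\<Sum>\<rho>\<in>partitions (insert i ?A). p N (insert X \<rho>) * ?w X \<rho>)"
    using pot_coeff_mul_aux_game[OF assms(1) tux_game_null_indicator_game[OF assms(4)] X(1) assms(4)] X(3)
    by simp
  also have "\<dots> = (\<Sum>\<rho>\<in>partitions (insert i ?A). if remove_elem i \<rho> = \<tau> then p N (insert X \<rho>) else 0)"
    using X(2) by (intro sum.cong) (simp_all add: null_indicator_game_def)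
  also have "\<dots> = (\<Sum>\<rho>\<in>{\<rho> \<in> partitions (insert i ?A). remove_elem i \<rho> = \<tau>}. p N (insert X \<rho>))"
    using N by (intro sum.inter_filter[symmetric]) (simp add: finite_partitions)
  also have "\<dots> = (\<Sum>B\<in>insert {} \<tau>. p N (insert X (add_to i \<tau> B)))"
    by (rule sum_remove_elem_fibre[OF assms(5)]) simp
  finally show ?thesis .
qed

lemma card_mul_p_add_to_block:
  assumes NP: "null_player_property U (shapley_r r)"
    and "N \<subseteq> U" "i \<in> N" "partition_on (N - {i}) \<sigma>" "X \<in> \<sigma>"
  shows "real (card N - card X) * p N (add_to i \<sigma> X)
       = real (card X) * (\<Sum>B\<in>insert {} \<sigma> - {X}. p N (add_to i \<sigma> B))"
proof -
  let ?\<tau> = "\<sigma> - {X}"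
  let ?v = "aux_game r N (null_indicator_game i X ?\<tau>)"
  have N: "finite N"
    using assms(2) U finite_subset by blast
  have X: "X \<subseteq> N - {i}" "X \<noteq> {}"
    using assms(4,5) by (auto simp: partition_on_def)
  have \<tau>: "partition_on (N - {i} - X) ?\<tau>"
    by (rule partition_on_Diff_block[OF assms(4,5)])
  have "0 < card X" "card X < card N"
    using X assms(3) finite_subset[OF _ N] psubset_card_mono[OF N, of X]
    by (auto simp: card_gt_0_iff)
  have "insert (insert i X) ?\<tau> = add_to i \<sigma> X"
    using X(2) by (simp add: add_to_def)
  then have "real (card N - card X) * p N (add_to i \<sigma> X)
      = pot_coeff (card N) (Suc (card X)) * real (card N - card X) * ?v X"
    using pot_coeff_mul_aux_null_indicator_game_insert[OF assms(2,3) X \<tau>]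
      aux_game_null_indicator_game[OF NP assms(2,3) X] by simp
  also have "\<dots> = real (card X) * (pot_coeff (card N) (card X) * ?v X)"
    using pot_coeff_Suc[OF \<open>0 < card X\<close> \<open>card X < card N\<close>] by simp
  also have "pot_coeff (card N) (card X) * ?v X = (\<Sum>B\<in>insert {} \<sigma> - {X}. p N (add_to i \<sigma> B))"
    unfolding pot_coeff_mul_aux_null_indicator_game[OF assms(2,3) X \<tau>]
    using assms(5) X(2) insert_block_add_to_Diff[OF assms(5) X(2)]
    by (intro sum.cong) auto
  finally show ?thesis .
qed

lemma p_add_to:
  assumes NP: "null_player_property U (shapley_r r)"
    and "N \<subseteq> U" "i \<in> N" "partition_on (N - {i}) \<sigma>" "B \<in> insert {} \<sigma>"
  shows "p N (add_to i \<sigma> B) = join_weight B * p N (add_to i \<sigma> {})"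
proof -
  let ?p = "\<lambda>B. p N (add_to i \<sigma> B)"
  let ?T = "\<Sum>B\<in>insert {} \<sigma>. ?p B"
  \<comment> \<open>Summing \<open>card N * ?p X = card X * ?T\<close> over the blocks \<open>X\<close> of \<open>\<sigma>\<close>
    gives \<open>?T = card N * ?p {}\<close>.\<close>
  have N: "finite N" "0 < card N"
    using assms(2,3) U finite_subset card_gt_0_iff by blast+
  have \<sigma>: "finite \<sigma>" "{} \<notin> \<sigma>"
    using assms(4) N(1) finite_elements partition_onD3 by blast+
  have X: "real (card N) * ?p X = real (card X) * ?T" if "X \<in> \<sigma>" for X
  proof -
    have "card X \<le> card N"
      using that assms(4) N(1) by (intro card_mono) (auto simp: partition_on_def)
    moreover have rest: "(\<Sum>B\<in>insert {} \<sigma> - {X}. ?p B) = ?T - ?p X"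
      using that \<sigma>(1) by (simp add: sum_diff1)
    ultimately show ?thesis
      using card_mul_p_add_to_block[OF NP assms(2-4) that, unfolded rest]
      by (simp add: of_nat_diff algebra_simps)
  qed
  have "(\<Sum>X\<in>\<sigma>. card X) = card N - 1"
    using product_partition[OF assms(4)] finite_block[OF assms(4)] N(1) assms(3) by simp
  then have "real (card N) * (?T - ?p {}) = (real (card N) - 1) * ?T"
    using \<sigma> X N(2) by (simp add: sum_distrib_left of_nat_diff flip: sum_distrib_right of_nat_sum)
  then have T: "?T = real (card N) * ?p {}"
    by (simp add: algebra_simps)
  show ?thesis
  proof (cases "B = {}")
    case False
    then show ?thesis
      using X[of B] assms(5) N(2) by (simp add: T join_weight_def)
  qed (simp add: join_weight_def)
qed

lemma p_eq_ewens:
  assumes NP: "null_player_property U (shapley_r r)" and RP: "random_partition U p"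
    and "N \<subseteq> U" "partition_on N \<pi>"
  shows "p N \<pi> = ewens N \<pi>"
proof -
  define q where "q \<rho> = p N \<rho> / ewens_weight \<rho>" for \<rho>
  have N: "finite N"
    using assms(3) U finite_subset by blast
  have "q (add_to i (remove_elem i \<rho>) {}) = q \<rho>" if \<rho>: "partition_on N \<rho>" and i: "i \<in> N" for \<rho> i
  proof -
    let ?\<sigma> = "remove_elem i \<rho>"
    have \<sigma>: "partition_on (N - {i}) ?\<sigma>"
      by (rule partition_on_remove_elem[OF \<rho>])
    obtain B where B: "B \<in> insert {} ?\<sigma>" "\<rho> = add_to i ?\<sigma> B"
      using add_to_remove_elem[OF \<rho> i] by blast
    have "finite B"
      using B(1) finite_block[OF \<sigma>] N by auto
    moreover have "p N \<rho> = join_weight B * p N (add_to i ?\<sigma> {})"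
      using p_add_to[OF NP assms(3) i \<sigma> B(1)] B(2) by simp
    moreover have "ewens_weight \<rho> = join_weight B * ewens_weight (add_to i ?\<sigma> {})"
      using ewens_weight_add_to[OF \<sigma> _ _ B(1), of i] ewens_weight_add_to[OF \<sigma>, of i "{}"] B(2) N
      by (simp add: join_weight_def)
    ultimately show ?thesis
      using join_weight_pos[of B] by (simp add: q_def)
  qed
  then have q: "q \<rho> = q ((\<lambda>i. {i}) ` N)" if "partition_on N \<rho>" for \<rho>
    using isolation_invariant_const[OF N _ that] by blast
  define c where "c = q ((\<lambda>i. {i}) ` N)"
  have p: "p N \<rho> = c * ewens_weight \<rho>" if "partition_on N \<rho>" for \<rho>
    using q[OF that, folded c_def] ewens_weight_pos[OF finite_elements[OF N that]]
    by (simp add: q_def field_simps)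
  have "1 = (\<Sum>\<rho>\<in>partitions N. p N \<rho>)"
    using RP assms(3) by (simp add: random_partition_def)
  also have "\<dots> = c * fact (card N)"
    using p sum_ewens_weight[OF N] by (simp flip: sum_distrib_left)
  finally show ?thesis
    using p[OF assms(4)] by (simp add: ewens_eq_ewens_weight field_simps)
qed

end

definition fibre_game :: "'a \<Rightarrow> 'a set \<Rightarrow> 'a set set \<Rightarrow> 'a tux \<Rightarrow> 'a tux" where
  "fibre_game i S \<pi> w S' \<rho> = (if S' = S \<and> remove_elem i \<rho> = \<pi> then w S' \<rho> else 0)"

lemma tux_game_fibre_game: "S \<noteq> {} \<Longrightarrow> tux_game N (fibre_game i S \<pi> w)"
  by (simp add: tux_game_def fibre_game_def)

lemma mpw_game_fibre_game:
  assumes "finite N" "i \<in> N" "S \<subseteq> N - {i}" "partition_on (N - {i} - S) \<pi>"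
  shows "mpw_game N (fibre_game i S \<pi> w) S = ewens (N - {i} - S) \<pi> * r_star N w i S \<pi>"
proof -
  have "mpw_game N (fibre_game i S \<pi> w) S
      = (\<Sum>\<rho>\<in>partitions (N - S). if remove_elem i \<rho> = \<pi> then ewens (N - S) \<rho> * w S \<rho> else 0)"
    unfolding mpw_game_def by (intro sum.cong) (simp_all add: fibre_game_def)
  also have "\<dots> = ewens (N - {i} - S) \<pi> * r_star N w i S \<pi>"
    unfolding ewens_mul_r_star_fibre[OF assms] using assms(1)
    by (intro sum.inter_filter[symmetric]) (simp add: finite_partitions)
  finally show ?thesis .
qed

lemma restriction_fibre_game:
  assumes R: "restriction_operator U r" and PN: "preserves_null U r"
    and "N \<subseteq> U" "tux_game N w" "i \<in> N" "S \<subseteq> N - {i}" "S \<noteq> {}" "partition_on (N - {i} - S) \<tau>"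
  shows "r N (fibre_game i S \<pi> w) i S \<tau> = (if \<tau> = \<pi> then r N w i S \<pi> else 0)"
proof -
  have emb: "embedded (N - {i}) S \<tau>"
    using assms(6,8) by (simp add: embedded_def)
  have w: "tux_game N (fibre_game i S \<pi> w)"
    using assms(7) by (rule tux_game_fibre_game)
  have rem: "remove_elem i (add_to i \<tau> B) = \<tau>" if "B \<in> insert {} \<tau>" for B
    using remove_elem_add_to[OF assms(8) _ that] by simp
  show ?thesis
  proof (cases "\<tau> = \<pi>")
    case True
    then have "r N (fibre_game i S \<pi> w) i S \<tau> = r N w i S \<tau>"
      using rem by (intro restriction_cong[OF R assms(3) w assms(4,5) emb]) (simp add: fibre_game_def)
    then show ?thesis
      using True by simp
  next
    case False
    then have "r N (fibre_game i S \<pi> w) i S \<tau> = 0"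
      using rem by (intro restriction_eq_zero[OF R PN assms(3) w assms(5) emb]) (simp add: fibre_game_def)
    then show ?thesis
      using False by simp
  qed
qed

context
  fixes U :: "'a set" and r :: "'a restr"
  assumes U: "finite U"
    and R: "restriction_operator U r" and PN: "preserves_null U r" and PI: "path_independent U r"
    and POT: "\<And>N w. N \<subseteq> U \<Longrightarrow> tux_game N w \<Longrightarrow> pot_r r N w = expect ewens N w"
begin

lemma aux_game_eq_mpw_game:
  assumes "N \<subseteq> U" "tux_game N w" "T \<subseteq> N" "T \<noteq> {}"
  shows "aux_game r N w T = mpw_game N w T"
proof -
  have N: "finite N"
    using assms(1) U finite_subset by blast
  have "pot_coeff (card N) (card T) * aux_game r N w T = (\<Sum>\<tau>\<in>partitions (N - T). ewens N (insert T \<tau>) * w T \<tau>)"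
    by (rule pot_coeff_mul_aux_game[OF U R PN POT assms])
  also have "\<dots> = pot_coeff (card N) (card T) * mpw_game N w T"
    unfolding mpw_game_def sum_distrib_left
    using N assms(3,4) by (intro sum.cong) (simp_all add: ewens_insert_block)
  finally show ?thesis
    using pot_coeff_pos[of "card N" "card T"] by simp
qed

lemma restriction_eq_r_star:
  assumes "N \<subseteq> U" "tux_game N w" "i \<in> N" "embedded (N - {i}) S \<pi>"
  shows "r N w i S \<pi> = r_star N w i S \<pi>"
proof (cases "S = {}")
  case True
  then show ?thesis
    using assms(4) restriction_tux_game[OF R assms(1-3)] restriction_operator_r_star[of U]
      restriction_tux_game[of U r_star, OF _ assms(1-3)]
    by (simp add: tux_game_def embedded_def)
next
  case False
  let ?A = "N - {i} - S" and ?w = "fibre_game i S \<pi> w"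
  have N: "finite N"
    using assms(1) U finite_subset by blast
  have S: "S \<subseteq> N - {i}" "partition_on ?A \<pi>"
    using assms(4) by (auto simp: embedded_def)
  have w: "tux_game N ?w" "tux_game (N - {i}) (r N ?w i)"
    using False restriction_tux_game[OF R assms(1) _ assms(3)] by (simp_all add: tux_game_fibre_game)
  have "ewens ?A \<pi> * r N w i S \<pi> = (\<Sum>\<tau>\<in>partitions ?A. ewens ?A \<tau> * r N ?w i S \<tau>)"
    using N S False by (subst sum_eq_single[of _ \<pi>])
      (simp_all add: finite_partitions restriction_fibre_game[OF R PN assms(1-3)])
  also have "\<dots> = aux_game r (N - {i}) (r N ?w i) S"
    using aux_game_eq_mpw_game[OF _ w(2) S(1) False] assms(1)
    by (simp add: mpw_game_def Diff_insert2 [symmetric] subset_iff)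
  also have "\<dots> = aux_game r N ?w S"
    by (rule aux_game_restriction[OF R PI N assms(1) w(1) assms(3) S(1)])
  also have "\<dots> = ewens ?A \<pi> * r_star N w i S \<pi>"
    using aux_game_eq_mpw_game[OF assms(1) w(1) _ False] mpw_game_fibre_game[OF N assms(3) S] S(1)
    by auto
  finally show ?thesis
    using ewens_pos[OF _ S(2)] N by simp
qed

end

theorem theorem5:
  fixes U :: "'a set"
  assumes "finite U"
  shows "random_partition U ewens \<and> generates_potential U ewens \<and>
         (\<exists>r. admissible_restriction U ewens r) \<and>
         (\<forall>p. random_partition U p \<and> generates_potential U p \<and>
              (\<exists>r. admissible_restriction U p r) \<longrightarrow>
              (\<forall>N \<pi>. N \<subseteq> U \<longrightarrow> partition_on N \<pi> \<longrightarrow> p N \<pi> = ewens N \<pi>)) \<and>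
         admissible_restriction U ewens r_star \<and>
         (\<forall>r. admissible_restriction U ewens r \<longrightarrow>
              (\<forall>N w i S \<pi>. N \<subseteq> U \<longrightarrow> tux_game N w \<longrightarrow> i \<in> N \<longrightarrow>
                  embedded (N - {i}) S \<pi> \<longrightarrow> r N w i S \<pi> = r_star N w i S \<pi>)) \<and>
         (\<forall>N w i. N \<subseteq> U \<longrightarrow> tux_game N w \<longrightarrow> i \<in> N \<longrightarrow>
              shapley_r r_star N w i = mpw N w i)"
proof (intro conjI allI impI)
  show "random_partition U ewens" "generates_potential U ewens" "admissible_restriction U ewens r_star"
    using assms by (simp_all add: random_partition_ewens generates_potential_ewens admissible_restriction_r_star)
  then show "\<exists>r. admissible_restriction U ewens r"
    by blast
next
  fix p N \<pi>
  assume "random_partition U p \<and> generates_potential U p \<and> (\<exists>r. admissible_restriction U p r)"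
    and "N \<subseteq> U" "partition_on N \<pi>"
  then obtain r where RP: "random_partition U p" and A: "admissible_restriction U p r"
    by blast
  show "p N \<pi> = ewens N \<pi>"
    by (rule p_eq_ewens[OF assms admissible_restrictionD(1,3,4)[OF A]
          admissible_restriction_null_player_property[OF assms A] RP \<open>N \<subseteq> U\<close> \<open>partition_on N \<pi>\<close>])
next
  fix r N w i S \<pi>
  assume "admissible_restriction U ewens r"
  note r = admissible_restrictionD[OF this]
  assume "N \<subseteq> U" "tux_game N w" "i \<in> N" "embedded (N - {i}) S \<pi>"
  then show "r N w i S \<pi> = r_star N w i S \<pi>"
    using restriction_eq_r_star[OF assms r(1,3,2)] r(4) by blast
next
  fix N w i
  assume "N \<subseteq> U" "tux_game N w" "i \<in> N"
  then show "shapley_r r_star N w i = mpw N w i"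
    using assms by (simp add: shapley_r_r_star finite_subset)
qed

end
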